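(* For every integer $n\ge 5$ there exists an $(n^2,\lfloor n/2\rfloor)$-array that is not layerable.
   Context: $[n]=\{1,2,\dots,n\}$. For positive integers $n,d,k$, an $(n^d,k)$-array is a $d$-dimensional array of dimensions $n\times n\times\cdots\times n$ such that each entry is a subset of $[n]$ of cardinality exactly $k$, and every number in $[n]$ occurs in exactly $k$ of the entries along any axis-parallel line of the array (an axis-parallel line is the set of $n$ cells obtained by fixing all coordinates but one). A layer of an $(n^d,k)$-array is a choice of one element from the set in each cell such that each symbol of $[n]$ is chosen at most once (equivalently exactly once) along every axis-parallel line. The array is layerable if its entries can be partitioned into $k$ layers, i.e. there are $k$ layers such that every element of every cell's set is chosen in exactly one of them. *)

theory Defs
  imports Main
begin

definition cells :: "nat \<Rightarrow> nat \<Rightarrow> nat list set" where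
  "cells n d = {c. length c = d \<and> set c \<subseteq> {1..n}}"

text \<open>An (n^d,k)-array: each cell is a k-subset of [n], and every symbol of [n]
  occurs in exactly k entries along every axis-parallel line
  (the line through cell c in direction a consists of the cells c[a := t], t in [n]).\<close>
definition is_array :: "nat \<Rightarrow> nat \<Rightarrow> nat \<Rightarrow> (nat list \<Rightarrow> nat set) \<Rightarrow> bool" where
  "is_array n d k A \<longleftrightarrow>
     (\<forall>c\<in>cells n d. A c \<subseteq> {1..n} \<and> card (A c) = k) \<and>
     (\<forall>c\<in>cells n d. \<forall>a<d. \<forall>x\<in>{1..n}.
        card {t\<in>{1..n}. x \<in> A (c[a := t])} = k)"

definition is_layer :: "nat \<Rightarrow> nat \<Rightarrow> (nat list \<Rightarrow> nat set) \<Rightarrow> (nat list \<Rightarrow> nat) \<Rightarrow> bool" where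
  "is_layer n d A L \<longleftrightarrow>
     (\<forall>c\<in>cells n d. L c \<in> A c) \<and>
     (\<forall>c\<in>cells n d. \<forall>a<d. \<forall>t\<in>{1..n}. \<forall>t'\<in>{1..n}.
        t \<noteq> t' \<longrightarrow> L (c[a := t]) \<noteq> L (c[a := t']))"

definition layerable :: "nat \<Rightarrow> nat \<Rightarrow> nat \<Rightarrow> (nat list \<Rightarrow> nat set) \<Rightarrow> bool" where
  "layerable n d k A \<longleftrightarrow>
     (\<exists>Ls :: nat \<Rightarrow> nat list \<Rightarrow> nat.
        (\<forall>i<k. is_layer n d A (Ls i)) \<and>
        (\<forall>c\<in>cells n d. \<forall>x\<in>A c. \<exists>!i. i < k \<and> Ls i c = x))"

end

theory Submission
  imports Defs
begin

text \<open>A layer of a two-dimensional array is a Latin square: each of its rows and columns is a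
  permutation of [n]. Hence, for any integer weights a, b, c, the sum over all cells (i, j) of
  a i x + b j x + c i j, where x is the symbol the layer picks in cell (i, j), does not depend on
  the layer. If the weights make a i x + b j x + c i j divisible by k for every symbol x of
  every cell (i, j), while this layer-independent sum is not divisible by k, then the array has
  no layer at all. For n = 2k + 1 and n = 2k we give explicit arrays together with such weights;
  the two sums are k - 1 and k(k - 1)/2 - 1. That every symbol occurs exactly k times along
  every line follows by double counting from its occurring at least k times.\<close>

section \<open>Two-dimensional arrays and their layers\<close>

definition square_array :: "(nat \<Rightarrow> nat \<Rightarrow> nat set) \<Rightarrow> nat list \<Rightarrow> nat set" where
  "square_array F c = F (c ! 0) (c ! 1)"

lemma square_array_apply [simp]: "square_array F [i, j] = F i j"
  by (simp add: square_array_def)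

lemma cells_2_iff: "c \<in> cells n 2 \<longleftrightarrow> (\<exists>i j. c = [i, j] \<and> i \<in> {1..n} \<and> j \<in> {1..n})"
proof
  assume "c \<in> cells n 2"
  then have "length c = 2" and "set c \<subseteq> {1..n}" by (auto simp: cells_def)
  then show "\<exists>i j. c = [i, j] \<and> i \<in> {1..n} \<and> j \<in> {1..n}"
    by (auto simp: numeral_2_eq_2 length_Suc_conv)
qed (auto simp: cells_def)

lemma sum_card_incidences:
  assumes "finite S" "finite U" "\<And>t. t \<in> S \<Longrightarrow> G t \<subseteq> U"
  shows "(\<Sum>x\<in>U. card {t\<in>S. x \<in> G t}) = (\<Sum>t\<in>S. card (G t))"
proof -
  have "(\<Sum>x\<in>U. card {t\<in>S. x \<in> G t}) = (\<Sum>x\<in>U. \<Sum>t\<in>S. if x \<in> G t then 1 else 0)"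
    using assms(1) by (simp add: sum.inter_filter[symmetric])
  also have "\<dots> = (\<Sum>t\<in>S. \<Sum>x\<in>U. if x \<in> G t then 1 else 0)"
    by (rule sum.swap)
  also have "\<dots> = (\<Sum>t\<in>S. card {x\<in>U. x \<in> G t})"
    using assms(2) by (simp add: sum.inter_filter[symmetric])
  also have "\<dots> = (\<Sum>t\<in>S. card (G t))"
    using assms(3) by (intro sum.cong refl arg_cong[where f = card]) auto
  finally show ?thesis .
qed

lemma card_incidences_eq_if_ge:
  assumes "finite S"
    and cell: "\<And>t. t \<in> S \<Longrightarrow> G t \<subseteq> S \<and> card (G t) = k"
    and ge: "\<And>x. x \<in> S \<Longrightarrow> k \<le> card {t\<in>S. x \<in> G t}"
    and "x \<in> S"
  shows "card {t\<in>S. x \<in> G t} = k"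
proof (rule ccontr)
  assume "card {t\<in>S. x \<in> G t} \<noteq> k"
  with ge \<open>x \<in> S\<close> have "k < card {t\<in>S. x \<in> G t}" by force
  then have "(\<Sum>y\<in>S. k) < (\<Sum>y\<in>S. card {t\<in>S. y \<in> G t})"
    using assms by (intro sum_strict_mono_ex1) auto
  also have "\<dots> = (\<Sum>t\<in>S. card (G t))"
    using assms by (intro sum_card_incidences) auto
  also have "\<dots> = (\<Sum>t\<in>S. k)"
    using cell by simp
  finally show False by simp
qed

lemma is_array_square_arrayI:
  assumes cell: "\<And>i j. i \<in> {1..n} \<Longrightarrow> j \<in> {1..n} \<Longrightarrow> F i j \<subseteq> {1..n} \<and> card (F i j) = k"
    and row_ge: "\<And>i x. i \<in> {1..n} \<Longrightarrow> x \<in> {1..n} \<Longrightarrow> k \<le> card {t\<in>{1..n}. x \<in> F i t}"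
    and col_ge: "\<And>j x. j \<in> {1..n} \<Longrightarrow> x \<in> {1..n} \<Longrightarrow> k \<le> card {t\<in>{1..n}. x \<in> F t j}"
  shows "is_array n 2 k (square_array F)"
  unfolding is_array_def
proof (intro conjI ballI allI impI)
  fix c assume "c \<in> cells n 2"
  then obtain i j where c: "c = [i, j]" "i \<in> {1..n}" "j \<in> {1..n}"
    by (auto simp: cells_2_iff)
  then show "square_array F c \<subseteq> {1..n}" "card (square_array F c) = k"
    using cell by auto
  fix a x assume "a < (2::nat)" "x \<in> {1..n}"
  then consider "a = 0" | "a = 1" by linarith
  then show "card {t\<in>{1..n}. x \<in> square_array F (c[a := t])} = k"
  proof cases
    case 1
    have "card {t\<in>{1..n}. x \<in> F t j} = k"
      by (rule card_incidences_eq_if_ge[OF _ _ col_ge[OF \<open>j \<in> _\<close>] \<open>x \<in> _\<close>])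
        (use cell[OF _ \<open>j \<in> _\<close>] in auto)
    then show ?thesis
      using c 1 by simp
  next
    case 2
    have "card {t\<in>{1..n}. x \<in> F i t} = k"
      by (rule card_incidences_eq_if_ge[OF _ _ row_ge[OF \<open>i \<in> _\<close>] \<open>x \<in> _\<close>])
        (use cell[OF \<open>i \<in> _\<close>] in auto)
    then show ?thesis
      using c 2 by simp
  qed
qed

lemma is_layer_square_mem:
  assumes "is_layer n 2 (square_array F) L" "i \<in> {1..n}" "j \<in> {1..n}"
  shows "L [i, j] \<in> F i j"
proof -
  have "[i, j] \<in> cells n 2"
    using assms(2,3) by (simp add: cells_def)
  with assms(1) show ?thesis
    unfolding is_layer_def by fastforce
qed

lemma is_layer_line_inj:
  "is_layer n d A L \<Longrightarrow> c \<in> cells n d \<Longrightarrow> a < d \<Longrightarrow> t \<in> {1..n} \<Longrightarrow> t' \<in> {1..n} \<Longrightarrow> t \<noteq> t'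
    \<Longrightarrow> L (c[a := t]) \<noteq> L (c[a := t'])"
  by (simp add: is_layer_def)

lemma is_layer_square_row_bij:
  assumes L: "is_layer n 2 (square_array F) L"
    and sub: "\<And>i j. i \<in> {1..n} \<Longrightarrow> j \<in> {1..n} \<Longrightarrow> F i j \<subseteq> {1..n}"
    and i: "i \<in> {1..n}"
  shows "bij_betw (\<lambda>j. L [i, j]) {1..n} {1..n}"
proof -
  have c: "[i, 1] \<in> cells n 2"
    using i by (auto simp: cells_def)
  have neq: "L [i, t] \<noteq> L [i, t']"
    if "t \<in> {1..n}" "t' \<in> {1..n}" "t \<noteq> t'" for t t'
    using is_layer_line_inj[OF L c _ that, where a = 1] by simp
  have "inj_on (\<lambda>j. L [i, j]) {1..n}"
    by (rule inj_onI, rule ccontr) (simp add: neq)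
  moreover have "L [i, j] \<in> {1..n}" if "j \<in> {1..n}" for j
    using is_layer_square_mem[OF L i that] sub[OF i that] by blast
  ultimately show ?thesis
    by (simp add: bij_betw_def endo_inj_surj image_subset_iff)
qed

lemma is_layer_square_col_bij:
  assumes L: "is_layer n 2 (square_array F) L"
    and sub: "\<And>i j. i \<in> {1..n} \<Longrightarrow> j \<in> {1..n} \<Longrightarrow> F i j \<subseteq> {1..n}"
    and j: "j \<in> {1..n}"
  shows "bij_betw (\<lambda>i. L [i, j]) {1..n} {1..n}"
proof -
  have c: "[1, j] \<in> cells n 2"
    using j by (auto simp: cells_def)
  have neq: "L [t, j] \<noteq> L [t', j]"
    if "t \<in> {1..n}" "t' \<in> {1..n}" "t \<noteq> t'" for t t'
    using is_layer_line_inj[OF L c _ that, where a = 0] by simp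
  have "inj_on (\<lambda>i. L [i, j]) {1..n}"
    by (rule inj_onI, rule ccontr) (simp add: neq)
  moreover have "L [i, j] \<in> {1..n}" if "i \<in> {1..n}" for i
    using is_layer_square_mem[OF L that j] sub[OF that j] by blast
  ultimately show ?thesis
    by (simp add: bij_betw_def endo_inj_surj image_subset_iff)
qed

definition potential_total ::
    "nat \<Rightarrow> (nat \<Rightarrow> nat \<Rightarrow> 'a::comm_monoid_add) \<Rightarrow> (nat \<Rightarrow> nat \<Rightarrow> 'a) \<Rightarrow> (nat \<Rightarrow> nat \<Rightarrow> 'a) \<Rightarrow> 'a"
  where "potential_total n a b c =
    (\<Sum>i\<in>{1..n}. \<Sum>x\<in>{1..n}. a i x) + (\<Sum>j\<in>{1..n}. \<Sum>x\<in>{1..n}. b j x)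
      + (\<Sum>i\<in>{1..n}. \<Sum>j\<in>{1..n}. c i j)"

lemma layer_potential_sum:
  fixes a b c :: "nat \<Rightarrow> nat \<Rightarrow> 'a::comm_monoid_add"
  assumes L: "is_layer n 2 (square_array F) L"
    and sub: "\<And>i j. i \<in> {1..n} \<Longrightarrow> j \<in> {1..n} \<Longrightarrow> F i j \<subseteq> {1..n}"
  shows "(\<Sum>i\<in>{1..n}. \<Sum>j\<in>{1..n}. a i (L [i, j]) + b j (L [i, j]) + c i j)
    = potential_total n a b c"
proof -
  have "(\<Sum>i\<in>{1..n}. \<Sum>j\<in>{1..n}. a i (L [i, j])) = (\<Sum>i\<in>{1..n}. \<Sum>x\<in>{1..n}. a i x)"
    using is_layer_square_row_bij[OF L sub] by (intro sum.cong refl sum.reindex_bij_betw)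
  moreover have "(\<Sum>i\<in>{1..n}. \<Sum>j\<in>{1..n}. b j (L [i, j])) = (\<Sum>j\<in>{1..n}. \<Sum>x\<in>{1..n}. b j x)"
    using is_layer_square_col_bij[OF L sub]
    by (subst sum.swap) (intro sum.cong refl sum.reindex_bij_betw)
  ultimately show ?thesis
    by (simp add: potential_total_def sum.distrib)
qed

lemma no_layer_if_not_dvd_potential_total:
  fixes a b c :: "nat \<Rightarrow> nat \<Rightarrow> 'a::comm_semiring_1"
  assumes sub: "\<And>i j. i \<in> {1..n} \<Longrightarrow> j \<in> {1..n} \<Longrightarrow> F i j \<subseteq> {1..n}"
    and dvd: "\<And>i j x. i \<in> {1..n} \<Longrightarrow> j \<in> {1..n} \<Longrightarrow> x \<in> F i j \<Longrightarrow> m dvd a i x + b j x + c i j"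
    and not_dvd: "\<not> m dvd potential_total n a b c"
  shows "\<not> is_layer n 2 (square_array F) L"
proof
  assume L: "is_layer n 2 (square_array F) L"
  then have "m dvd (\<Sum>i\<in>{1..n}. \<Sum>j\<in>{1..n}. a i (L [i, j]) + b j (L [i, j]) + c i j)"
    using dvd is_layer_square_mem[OF L] by (intro dvd_sum) auto
  with not_dvd show False
    using layer_potential_sum[OF L sub, of a b c] by simp
qed

lemma not_layerable_if_no_layer:
  "0 < k \<Longrightarrow> (\<And>L. \<not> is_layer n d A L) \<Longrightarrow> \<not> layerable n d k A"
  unfolding layerable_def by blast

lemma square_array_counterexample:
  fixes a b c :: "nat \<Rightarrow> nat \<Rightarrow> 'a::comm_semiring_1"
  assumes cell: "\<And>i j. i \<in> {1..n} \<Longrightarrow> j \<in> {1..n} \<Longrightarrow> F i j \<subseteq> {1..n} \<and> card (F i j) = k"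
    and row_ge: "\<And>i x. i \<in> {1..n} \<Longrightarrow> x \<in> {1..n} \<Longrightarrow> k \<le> card {t\<in>{1..n}. x \<in> F i t}"
    and col_ge: "\<And>j x. j \<in> {1..n} \<Longrightarrow> x \<in> {1..n} \<Longrightarrow> k \<le> card {t\<in>{1..n}. x \<in> F t j}"
    and dvd: "\<And>i j x. i \<in> {1..n} \<Longrightarrow> j \<in> {1..n} \<Longrightarrow> x \<in> F i j \<Longrightarrow> m dvd a i x + b j x + c i j"
    and not_dvd: "\<not> m dvd potential_total n a b c"
    and "0 < k"
  shows "is_array n 2 k (square_array F) \<and> \<not> layerable n 2 k (square_array F)"
proof
  show "is_array n 2 k (square_array F)"
    using cell row_ge col_ge by (rule is_array_square_arrayI)
  have "\<not> is_layer n 2 (square_array F) L" for L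
    using cell dvd not_dvd by (intro no_layer_if_not_dvd_potential_total) auto
  then show "\<not> layerable n 2 k (square_array F)"
    using \<open>0 < k\<close> by (rule not_layerable_if_no_layer[rotated])
qed

section \<open>Counting and summing over intervals\<close>

lemma card_filter_ge_card_minus_1:
  assumes "finite S" "\<And>x y. x \<in> S \<Longrightarrow> y \<in> S \<Longrightarrow> \<not> P x \<Longrightarrow> \<not> P y \<Longrightarrow> x = y"
  shows "card S - 1 \<le> card {x\<in>S. P x}"
proof -
  have "card {x\<in>S. \<not> P x} \<le> 1"
    using assms by (auto simp: card_le_Suc0_iff_eq)
  moreover have "card S = card {x\<in>S. P x} + card {x\<in>S. \<not> P x}"
    using assms(1) by (subst card_Un_disjoint[symmetric]) (auto intro: arg_cong[where f = card])
  ultimately show ?thesis by linarith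
qed

lemma card_filter_atLeastAtMost_split:
  "m \<le> n \<Longrightarrow> card {t\<in>{1..n::nat}. P t} = card {t\<in>{1..m}. P t} + card {t\<in>{m+1..n}. P t}"
  by (subst card_Un_disjoint[symmetric]) (auto intro: arg_cong[where f = card])

lemma sum_atLeastAtMost_split_cong:
  assumes "m \<le> n" "\<And>s. s \<in> {1..m} \<Longrightarrow> f s = g s" "\<And>s. s \<in> {m+1..n} \<Longrightarrow> f s = h s"
  shows "(\<Sum>s\<in>{1..n}. f s) = (\<Sum>s\<in>{1..m}. g s) + (\<Sum>s\<in>{m+1..n::nat}. h s)"
proof -
  have "{1..n} = {1..m} \<union> {m+1..n}"
    using assms(1) by auto
  then have "(\<Sum>s\<in>{1..n}. f s) = (\<Sum>s\<in>{1..m}. f s) + (\<Sum>s\<in>{m+1..n}. f s)"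
    by (simp add: sum.union_disjoint)
  also have "\<dots> = (\<Sum>s\<in>{1..m}. g s) + (\<Sum>s\<in>{m+1..n}. h s)"
    using assms(2,3) by simp
  finally show ?thesis .
qed

text \<open>The next three lemmas are stated with Suc 0, the simp normal form of 1, so that they
  apply as rewrite rules.\<close>

lemma sum_atLeastAtMost_if_less:
  "(\<Sum>j\<in>{Suc 0..k}. if j < k then f j else 0) = (\<Sum>j\<in>{Suc 0..k-1}. f j)"
  by (cases k) (auto simp: sum.cl_ivl_Suc intro: sum.cong)

lemma sum_atLeastAtMost_if_gt:
  "(\<Sum>s\<in>{Suc 0..n}. if m < s then f s else 0) = (\<Sum>s\<in>{Suc m..n}. f s)"
proof -
  have "(\<Sum>s\<in>{Suc 0..n}. if m < s then f s else 0) = (\<Sum>s\<in>{Suc 0..n} \<inter> {s. m < s}. f s)"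
    by (simp add: sum.inter_restrict)
  also have "{Suc 0..n} \<inter> {s. m < s} = {Suc m..n}"
    by auto
  finally show ?thesis .
qed

lemma sum_atLeastAtMost_if_le:
  "m \<le> n \<Longrightarrow> (\<Sum>s\<in>{Suc 0..n}. if s \<le> m then f s else 0) = (\<Sum>s\<in>{Suc 0..m}. f s)"
proof -
  assume "m \<le> n"
  have "(\<Sum>s\<in>{Suc 0..n}. if s \<le> m then f s else 0) = (\<Sum>s\<in>{Suc 0..n} \<inter> {s. s \<le> m}. f s)"
    by (simp add: sum.inter_restrict)
  also have "{Suc 0..n} \<inter> {s. s \<le> m} = {Suc 0..m}"
    using \<open>m \<le> n\<close> by auto
  finally show ?thesis .
qed

text \<open>Otherwise simp peels the last summand off every sum over {1..2*k+1}.\<close>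

declare sum.cl_ivl_Suc [simp del]

lemma double_gauss_sum_shifted:
  "2 * (\<Sum>i\<in>{k+1..k+m}. int i - int k - 1) = int m * (int m - 1)"
proof (induction m)
  case (Suc m)
  have "{k+1..k + Suc m} = insert (k + Suc m) {k+1..k+m}"
    by auto
  then have "(\<Sum>i\<in>{k+1..k + Suc m}. int i - int k - 1) = (\<Sum>i\<in>{k+1..k+m}. int i - int k - 1) + int m"
    by simp
  with Suc.IH show ?case
    by (simp add: algebra_simps)
qed simp

section \<open>Odd order\<close>

text \<open>Indices and symbols in {1..k} are low, those in {k+1..2*k+1} high; the suffixes lh, hl
  and hh name the block of a cell by the kinds of its row and column. A hole is the symbol left
  out of the block's symbol range in a cell, and odd_extra is the high symbol added to an
  off-diagonal cell of the hh block.\<close>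

definition odd_rank :: "nat \<Rightarrow> nat \<Rightarrow> nat" where
  "odd_rank k j = (if j = 2*k+1 then k else if j = 2*k then 0 else j - k)"

definition odd_hole_lh :: "nat \<Rightarrow> nat \<Rightarrow> nat \<Rightarrow> nat" where
  "odd_hole_lh k i j = (if odd_rank k j + i \<le> k then odd_rank k j + i + k + 1 else odd_rank k j + i)"

definition odd_succ :: "nat \<Rightarrow> nat \<Rightarrow> nat" where
  "odd_succ k i = (if i = 2*k+1 then k+1 else i+1)"

definition odd_hole_hl :: "nat \<Rightarrow> nat \<Rightarrow> nat \<Rightarrow> nat" where
  "odd_hole_hl k i j = (if j = 1 then i else odd_succ k i)"

definition odd_partner :: "nat \<Rightarrow> nat \<Rightarrow> nat" where
  "odd_partner k i = (if i = 2*k+1 then 2*k else 2*k+1)"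

definition odd_extra :: "nat \<Rightarrow> nat \<Rightarrow> nat \<Rightarrow> nat" where
  "odd_extra k i j = (if j = odd_partner k i then i else odd_succ k i)"

definition odd_hole_hh :: "nat \<Rightarrow> nat \<Rightarrow> nat \<Rightarrow> nat" where
  "odd_hole_hh k i j = (if i < j then j - i else j + k + 1 - i)"

definition odd_square :: "nat \<Rightarrow> nat \<Rightarrow> nat \<Rightarrow> nat set" where
  "odd_square k i j =
    (if i \<le> k then (if j \<le> k then {1..k} else {k+1..2*k+1} - {odd_hole_lh k i j})
     else if j \<le> k then {k+1..2*k+1} - {odd_hole_hl k i j}
     else if i = j then {1..k}
     else insert (odd_extra k i j) ({1..k} - {odd_hole_hh k i j}))"

lemma odd_hole_lh_mem: "i \<in> {1..k} \<Longrightarrow> j \<in> {k+1..2*k+1} \<Longrightarrow> odd_hole_lh k i j \<in> {k+1..2*k+1}"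
  unfolding odd_hole_lh_def odd_rank_def by auto

lemma odd_hole_lh_inj_col:
  "i \<in> {1..k} \<Longrightarrow> j \<in> {k+1..2*k+1} \<Longrightarrow> j' \<in> {k+1..2*k+1}
    \<Longrightarrow> odd_hole_lh k i j = odd_hole_lh k i j' \<Longrightarrow> j = j'"
  unfolding odd_hole_lh_def odd_rank_def by (auto split: if_splits)

lemma odd_hole_lh_inj_row:
  "i \<in> {1..k} \<Longrightarrow> i' \<in> {1..k} \<Longrightarrow> j \<in> {k+1..2*k+1}
    \<Longrightarrow> odd_hole_lh k i j = odd_hole_lh k i' j \<Longrightarrow> i = i'"
  unfolding odd_hole_lh_def odd_rank_def by (auto split: if_splits)

lemma odd_hole_lh_neq_rank:
  "i \<in> {1..k} \<Longrightarrow> j \<in> {k+1..2*k+1} \<Longrightarrow> odd_hole_lh k i j \<noteq> k + 1 + odd_rank k j"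
  unfolding odd_hole_lh_def odd_rank_def by (auto split: if_splits)

lemma odd_succ_mem: "1 \<le> k \<Longrightarrow> i \<in> {k+1..2*k+1} \<Longrightarrow> odd_succ k i \<in> {k+1..2*k+1}"
  unfolding odd_succ_def by auto

lemma odd_succ_neq: "1 \<le> k \<Longrightarrow> odd_succ k i \<noteq> i"
  unfolding odd_succ_def by auto

lemma odd_hole_hl_inj_row:
  "i \<in> {k+1..2*k+1} \<Longrightarrow> i' \<in> {k+1..2*k+1} \<Longrightarrow> odd_hole_hl k i j = odd_hole_hl k i' j \<Longrightarrow> i = i'"
  unfolding odd_hole_hl_def odd_succ_def by (auto split: if_splits)

lemma odd_partner_mem: "1 \<le> k \<Longrightarrow> odd_partner k i \<in> {k+1..2*k+1}"
  unfolding odd_partner_def by auto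

lemma odd_partner_neq: "1 \<le> k \<Longrightarrow> odd_partner k i \<noteq> i"
  unfolding odd_partner_def by auto

lemma odd_extra_mem: "1 \<le> k \<Longrightarrow> i \<in> {k+1..2*k+1} \<Longrightarrow> odd_extra k i j \<in> {k+1..2*k+1}"
  unfolding odd_extra_def using odd_succ_mem by auto

lemma odd_hole_hh_mem:
  "i \<in> {k+1..2*k+1} \<Longrightarrow> j \<in> {k+1..2*k+1} \<Longrightarrow> i \<noteq> j \<Longrightarrow> odd_hole_hh k i j \<in> {1..k}"
  unfolding odd_hole_hh_def by auto

lemma odd_hole_hh_inj_col:
  "i \<in> {k+1..2*k+1} \<Longrightarrow> j \<in> {k+1..2*k+1} \<Longrightarrow> j' \<in> {k+1..2*k+1} \<Longrightarrow> j \<noteq> i \<Longrightarrow> j' \<noteq> i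
    \<Longrightarrow> odd_hole_hh k i j = odd_hole_hh k i j' \<Longrightarrow> j = j'"
  unfolding odd_hole_hh_def by (auto split: if_splits)

lemma odd_hole_hh_inj_row:
  "j \<in> {k+1..2*k+1} \<Longrightarrow> i \<in> {k+1..2*k+1} \<Longrightarrow> i' \<in> {k+1..2*k+1} \<Longrightarrow> i \<noteq> j \<Longrightarrow> i' \<noteq> j
    \<Longrightarrow> odd_hole_hh k i j = odd_hole_hh k i' j \<Longrightarrow> i = i'"
  unfolding odd_hole_hh_def by (auto split: if_splits)

lemma odd_square_low_mem:
  assumes "1 \<le> k" "i \<in> {1..2*k+1}" "s \<in> {1..k}"
  shows "s \<in> odd_square k i j \<longleftrightarrow> (i \<le> k \<and> j \<le> k) \<or> (k < i \<and> k < j \<and> (i = j \<or> s \<noteq> odd_hole_hh k i j))"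
  using assms odd_extra_mem[of k i j] by (auto simp: odd_square_def)

lemma odd_square_high_mem:
  assumes "1 \<le> k" "i \<in> {1..2*k+1}" "s \<in> {k+1..2*k+1}"
  shows "s \<in> odd_square k i j \<longleftrightarrow>
    (i \<le> k \<and> k < j \<and> s \<noteq> odd_hole_lh k i j) \<or> (k < i \<and> j \<le> k \<and> s \<noteq> odd_hole_hl k i j)
    \<or> (k < i \<and> k < j \<and> i \<noteq> j \<and> s = odd_extra k i j)"
  using assms by (auto simp: odd_square_def)

lemma odd_square_cell:
  assumes "1 \<le> k" "i \<in> {1..2*k+1}" "j \<in> {1..2*k+1}"
  shows "odd_square k i j \<subseteq> {1..2*k+1} \<and> card (odd_square k i j) = k"
proof -
  consider "i \<le> k" "j \<le> k" | "i \<le> k" "k < j" | "k < i" "j \<le> k" | "k < i" "i = j"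
    | "k < i" "k < j" "i \<noteq> j"
    by linarith
  then show ?thesis
  proof cases
    case 2
    then show ?thesis
      using assms odd_hole_lh_mem[of i k j] by (auto simp: odd_square_def)
  next
    case 3
    have "odd_hole_hl k i j \<in> {k+1..2*k+1}"
      using assms 3 odd_succ_mem[of k i] by (auto simp: odd_hole_hl_def)
    then show ?thesis
      using assms 3 by (auto simp: odd_square_def)
  next
    case 5
    have "odd_hole_hh k i j \<in> {1..k}" "odd_extra k i j \<in> {k+1..2*k+1}"
      using assms 5 odd_hole_hh_mem[of i k j] odd_extra_mem[of k i j] by auto
    then show ?thesis
      using 5 by (auto simp: odd_square_def card_insert_if)
  qed (auto simp: odd_square_def)
qed

lemma odd_square_high_row_count_ge:
  assumes k: "1 \<le> k" and i: "i \<in> {k+1..2*k+1}" and s: "s \<in> {k+1..2*k+1}"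
  shows "k \<le> card {t\<in>{1..k}. s \<in> odd_square k i t} + card {t\<in>{k+1..2*k+1}. s \<in> odd_square k i t}"
    (is "k \<le> card ?A + card ?B")
proof -
  have A: "?A = {t\<in>{1..k}. s \<noteq> odd_hole_hl k i t}"
    and B: "?B = {t\<in>{k+1..2*k+1}. t \<noteq> i \<and> s = odd_extra k i t}"
    using k i s by (auto simp: odd_square_high_mem)
  consider "s \<noteq> i" "s \<noteq> odd_succ k i" | "s = i" | "s = odd_succ k i"
    by blast
  then show ?thesis
  proof cases
    case 1
    then have "?A = {1..k}"
      unfolding A by (auto simp: odd_hole_hl_def)
    then show ?thesis
      by simp
  next
    case 2
    then have "{2..k} \<subseteq> ?A" "{odd_partner k i} \<subseteq> ?B"
      unfolding A B using k odd_succ_neq[of k i] odd_partner_mem[of k i] odd_partner_neq[of k i]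
      by (auto simp: odd_hole_hl_def odd_extra_def)
    then show ?thesis
      using card_mono[of ?A "{2..k}"] card_mono[of ?B "{odd_partner k i}"] by simp
  next
    case 3
    then have "{1} \<subseteq> ?A" "{k+1..2*k+1} - {i, odd_partner k i} \<subseteq> ?B"
      unfolding A B using k odd_succ_neq[of k i]
      by (auto simp: odd_hole_hl_def odd_extra_def)
    moreover have "card ({k+1..2*k+1} - {i, odd_partner k i}) = k - 1"
      using k i odd_partner_mem[of k i] odd_partner_neq[of k i] by (simp add: card_Diff_subset)
    ultimately show ?thesis
      using card_mono[of ?A "{1}"] card_mono[of ?B "{k+1..2*k+1} - {i, odd_partner k i}"] by simp
  qed
qed

lemma odd_square_row_count_ge:
  assumes k: "1 \<le> k" and i: "i \<in> {1..2*k+1}" and s: "s \<in> {1..2*k+1}"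
  shows "k \<le> card {t\<in>{1..2*k+1}. s \<in> odd_square k i t}"
proof -
  let ?A = "{t\<in>{1..k}. s \<in> odd_square k i t}" and ?B = "{t\<in>{k+1..2*k+1}. s \<in> odd_square k i t}"
  have split: "card {t\<in>{1..2*k+1}. s \<in> odd_square k i t} = card ?A + card ?B"
    by (rule card_filter_atLeastAtMost_split) simp
  consider "s \<le> k" "i \<le> k" | "s \<le> k" "k < i" | "k < s" "i \<le> k" | "k < s" "k < i"
    by linarith
  then show ?thesis
  proof cases
    case 1
    then have "?A = {1..k}"
      using k i s by (auto simp: odd_square_low_mem)
    then show ?thesis
      using split by simp
  next
    case 2
    then have "?B = {t\<in>{k+1..2*k+1}. t = i \<or> s \<noteq> odd_hole_hh k i t}"
      using k i s by (auto simp: odd_square_low_mem)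
    moreover have "card {k+1..2*k+1} - 1 \<le> card {t\<in>{k+1..2*k+1}. t = i \<or> s \<noteq> odd_hole_hh k i t}"
      using 2 i odd_hole_hh_inj_col[of i k] by (intro card_filter_ge_card_minus_1) auto
    ultimately show ?thesis
      using split by simp
  next
    case 3
    then have "?B = {t\<in>{k+1..2*k+1}. s \<noteq> odd_hole_lh k i t}"
      using k i s by (auto simp: odd_square_high_mem)
    moreover have "card {k+1..2*k+1} - 1 \<le> card {t\<in>{k+1..2*k+1}. s \<noteq> odd_hole_lh k i t}"
      using 3 i odd_hole_lh_inj_col[of i k] by (intro card_filter_ge_card_minus_1) auto
    ultimately show ?thesis
      using split by simp
  next
    case 4
    then show ?thesis
      using odd_square_high_row_count_ge[OF k] i s split by simp
  qed
qed

lemma odd_extra_surj: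
  assumes k: "1 \<le> k" and j: "j \<in> {k+1..2*k+1}" and s: "s \<in> {k+1..2*k+1}"
    and s_neq: "s \<noteq> k + 1 + odd_rank k j"
  shows "\<exists>w\<in>{k+1..2*k+1}. w \<noteq> j \<and> odd_extra k w j = s"
proof -
  from j have "j \<le> 2*k+1"
    by simp
  then consider "j = 2*k+1" | "j = 2*k" | "j < 2*k"
    by linarith
  then show ?thesis
  proof cases
    case 1
    with s_neq have "s \<noteq> 2*k+1"
      by (simp add: odd_rank_def)
    with 1 s show ?thesis
      by (intro bexI[of _ s]) (auto simp: odd_extra_def odd_partner_def)
  next
    case 2
    with s_neq k have "s \<noteq> k+1"
      by (simp add: odd_rank_def)
    with 2 k s show ?thesis
      by (cases "s = 2*k+1")
        (auto simp: odd_extra_def odd_partner_def odd_succ_def intro!: bexI[of _ "2*k+1"] bexI[of _ "s - 1"])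
  next
    case 3
    with s_neq k j have "s \<noteq> j+1"
      by (simp add: odd_rank_def)
    with 3 k s j show ?thesis
      by (cases "s = k+1")
        (auto simp: odd_extra_def odd_partner_def odd_succ_def intro!: bexI[of _ "2*k+1"] bexI[of _ "s - 1"])
  qed
qed

lemma odd_square_high_col_count_ge:
  assumes k: "1 \<le> k" and j: "j \<in> {k+1..2*k+1}" and s: "s \<in> {k+1..2*k+1}"
  shows "k \<le> card {t\<in>{1..k}. s \<in> odd_square k t j} + card {t\<in>{k+1..2*k+1}. s \<in> odd_square k t j}"
    (is "k \<le> card ?A + card ?B")
proof -
  have A: "?A = {t\<in>{1..k}. s \<noteq> odd_hole_lh k t j}"
    using k j s by (auto simp: odd_square_high_mem)
  show ?thesis
  proof (cases "s = k + 1 + odd_rank k j")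
    case True
    then have "s \<noteq> odd_hole_lh k t j" if "t \<in> {1..k}" for t
      using odd_hole_lh_neq_rank[OF that j] by simp
    then have "?A = {1..k}"
      unfolding A by blast
    then show ?thesis
      by simp
  next
    case False
    have "card {1..k} - 1 \<le> card ?A"
      unfolding A using j odd_hole_lh_inj_row[of _ k _ j] by (intro card_filter_ge_card_minus_1) auto
    moreover obtain w where "w \<in> {k+1..2*k+1}" "w \<noteq> j" "odd_extra k w j = s"
      using odd_extra_surj[OF k j s False] by blast
    then have "{w} \<subseteq> ?B"
      using k j s by (auto simp: odd_square_high_mem)
    ultimately show ?thesis
      using card_mono[of ?B "{w}"] by simp
  qed
qed

lemma odd_square_col_count_ge:
  assumes k: "1 \<le> k" and j: "j \<in> {1..2*k+1}" and s: "s \<in> {1..2*k+1}"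
  shows "k \<le> card {t\<in>{1..2*k+1}. s \<in> odd_square k t j}"
proof -
  let ?A = "{t\<in>{1..k}. s \<in> odd_square k t j}" and ?B = "{t\<in>{k+1..2*k+1}. s \<in> odd_square k t j}"
  have split: "card {t\<in>{1..2*k+1}. s \<in> odd_square k t j} = card ?A + card ?B"
    by (rule card_filter_atLeastAtMost_split) simp
  consider "s \<le> k" "j \<le> k" | "s \<le> k" "k < j" | "k < s" "j \<le> k" | "k < s" "k < j"
    by linarith
  then show ?thesis
  proof cases
    case 1
    then have "?A = {1..k}"
      using k s by (auto simp: odd_square_low_mem)
    then show ?thesis
      using split by simp
  next
    case 2
    then have "?B = {t\<in>{k+1..2*k+1}. t = j \<or> s \<noteq> odd_hole_hh k t j}"
      using k s by (auto simp: odd_square_low_mem)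
    moreover have "card {k+1..2*k+1} - 1 \<le> card {t\<in>{k+1..2*k+1}. t = j \<or> s \<noteq> odd_hole_hh k t j}"
      using 2 j odd_hole_hh_inj_row[of j k] by (intro card_filter_ge_card_minus_1) auto
    ultimately show ?thesis
      using split by simp
  next
    case 3
    then have "?B = {t\<in>{k+1..2*k+1}. s \<noteq> odd_hole_hl k t j}"
      using k s by (auto simp: odd_square_high_mem)
    moreover have "card {k+1..2*k+1} - 1 \<le> card {t\<in>{k+1..2*k+1}. s \<noteq> odd_hole_hl k t j}"
      using odd_hole_hl_inj_row[of _ k _ j] by (intro card_filter_ge_card_minus_1) auto
    ultimately show ?thesis
      using split by simp
  next
    case 4
    then show ?thesis
      using odd_square_high_col_count_ge[OF k] j s split by simp
  qed
qed

definition odd_symbol_weight :: "nat \<Rightarrow> nat \<Rightarrow> int" where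
  "odd_symbol_weight k s = int (k+1) - int s"

definition odd_index_weight :: "nat \<Rightarrow> nat \<Rightarrow> int" where
  "odd_index_weight k i = (if i = 2*k+1 then - int k else int k - int i)"

definition odd_row_weight :: "nat \<Rightarrow> nat \<Rightarrow> nat \<Rightarrow> int" where
  "odd_row_weight k i s =
    (if k < i \<and> k < s then odd_symbol_weight k s - odd_index_weight k i else 0)"

definition odd_col_weight :: "nat \<Rightarrow> nat \<Rightarrow> nat \<Rightarrow> int" where
  "odd_col_weight k j s =
    (if k < s then (if j = 2*k+1 then -1 else if j \<le> k then - odd_symbol_weight k s else 0) else 0)"

definition odd_cell_weight :: "nat \<Rightarrow> nat \<Rightarrow> nat \<Rightarrow> int" where
  "odd_cell_weight k i j =
    (if k < i \<and> j \<le> k then odd_index_weight k i else if i \<le> k \<and> j = 2*k+1 then 1 else 0)"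

lemma odd_extra_weight_dvd:
  assumes "i \<in> {k+1..2*k+1}" "j \<in> {k+1..2*k+1}" "i \<noteq> j"
  shows "int k dvd odd_row_weight k i (odd_extra k i j) + odd_col_weight k j (odd_extra k i j)
    + odd_cell_weight k i j"
  using assms
  by (auto simp: odd_row_weight_def odd_col_weight_def odd_cell_weight_def odd_symbol_weight_def
      odd_index_weight_def odd_extra_def odd_partner_def odd_succ_def)

lemma odd_weights_dvd:
  assumes k: "1 \<le> k" and i: "i \<in> {1..2*k+1}" and j: "j \<in> {1..2*k+1}" and s: "s \<in> odd_square k i j"
  shows "int k dvd odd_row_weight k i s + odd_col_weight k j s + odd_cell_weight k i j"
proof (cases "s \<le> k")
  case True
  have "1 \<le> s"
    using odd_square_cell[OF k i j] s by auto
  with True k i s have "(i \<le> k \<and> j \<le> k) \<or> (k < i \<and> k < j)"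
    by (auto simp: odd_square_low_mem)
  with True show ?thesis
    by (auto simp: odd_row_weight_def odd_col_weight_def odd_cell_weight_def)
next
  case False
  have "s \<le> 2*k+1"
    using odd_square_cell[OF k i j] s by auto
  with False k i s have "(i \<le> k \<and> k < j) \<or> (k < i \<and> j \<le> k) \<or> (k < i \<and> k < j \<and> i \<noteq> j \<and> s = odd_extra k i j)"
    by (auto simp: odd_square_high_mem)
  with False i j show ?thesis
    using odd_extra_weight_dvd[of i k j]
    by (auto simp: odd_row_weight_def odd_col_weight_def odd_cell_weight_def)
qed

lemma odd_row_weight_sum:
  "(\<Sum>i\<in>{1..2*k+1}. \<Sum>x\<in>{1..2*k+1}. odd_row_weight k i x)
    = int (k+1) * ((\<Sum>s\<in>{k+1..2*k+1}. odd_symbol_weight k s) - (\<Sum>i\<in>{k+1..2*k+1}. odd_index_weight k i))"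
proof -
  have "(\<Sum>x\<in>{1..2*k+1}. odd_row_weight k i x)
      = (if k < i then (\<Sum>s\<in>{k+1..2*k+1}. odd_symbol_weight k s) - int (k+1) * odd_index_weight k i else 0)"
    for i
    by (simp add: odd_row_weight_def sum_atLeastAtMost_if_gt sum_subtractf)
  then show ?thesis
    by (simp add: sum_atLeastAtMost_if_gt sum_subtractf sum_distrib_left algebra_simps)
qed

lemma odd_col_weight_sum:
  "(\<Sum>j\<in>{1..2*k+1}. \<Sum>x\<in>{1..2*k+1}. odd_col_weight k j x)
    = - int (k+1) - int k * (\<Sum>s\<in>{k+1..2*k+1}. odd_symbol_weight k s)"
proof -
  have "(\<Sum>x\<in>{1..2*k+1}. odd_col_weight k j x)
      = (if j = 2*k+1 then - int (k+1) else 0)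
        + (if j \<le> k then - (\<Sum>s\<in>{k+1..2*k+1}. odd_symbol_weight k s) else 0)"
    for j
    by (simp add: odd_col_weight_def sum_atLeastAtMost_if_gt sum_negf)
  then show ?thesis
    by (simp add: sum.distrib sum_atLeastAtMost_if_le sum.delta')
qed

lemma odd_cell_weight_sum:
  "(\<Sum>i\<in>{1..2*k+1}. \<Sum>j\<in>{1..2*k+1}. odd_cell_weight k i j)
    = int k * (\<Sum>i\<in>{k+1..2*k+1}. odd_index_weight k i) + int k"
proof -
  have "(\<Sum>j\<in>{1..2*k+1}. odd_cell_weight k i j)
      = (if k < i then int k * odd_index_weight k i else 0) + (if i \<le> k then 1 else 0)"
    for i
  proof (cases "k < i")
    case True
    then have "(\<Sum>j\<in>{1..2*k+1}. odd_cell_weight k i j)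
        = (\<Sum>j\<in>{1..2*k+1}. if j \<le> k then odd_index_weight k i else 0)"
      by (intro sum.cong) (auto simp: odd_cell_weight_def)
    with True show ?thesis
      by (simp add: sum_atLeastAtMost_if_le)
  next
    case False
    then have "(\<Sum>j\<in>{1..2*k+1}. odd_cell_weight k i j) = (\<Sum>j\<in>{1..2*k+1}. if j = 2*k+1 then 1 else 0)"
      by (intro sum.cong) (auto simp: odd_cell_weight_def)
    with False show ?thesis
      by (simp add: sum.delta')
  qed
  then show ?thesis
    by (simp add: sum.distrib sum_atLeastAtMost_if_gt sum_atLeastAtMost_if_le sum_distrib_left)
qed

lemma odd_weight_difference_sum:
  "(\<Sum>s\<in>{k+1..2*k+1}. odd_symbol_weight k s) - (\<Sum>i\<in>{k+1..2*k+1}. odd_index_weight k i) = int k"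
proof -
  have "(\<Sum>s\<in>{k+1..2*k+1}. odd_symbol_weight k s) - (\<Sum>i\<in>{k+1..2*k+1}. odd_index_weight k i)
      = (\<Sum>i\<in>{k+1..2*k+1}. if i = 2*k+1 then 0 else 1)"
    by (simp only: sum_subtractf[symmetric])
      (intro sum.cong, auto simp: odd_symbol_weight_def odd_index_weight_def)
  also have "\<dots> = (\<Sum>i\<in>{k+1..2*k}. 1)"
    by (simp add: sum.If_cases Diff_eq[symmetric] atLeastAtMostSuc_conv)
  finally show ?thesis
    by simp
qed

lemma odd_potential_total:
  "potential_total (2*k+1) (odd_row_weight k) (odd_col_weight k) (odd_cell_weight k) = int k - 1"
  using odd_weight_difference_sum[of k]
  unfolding potential_total_def odd_row_weight_sum odd_col_weight_sum odd_cell_weight_sum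
  by (simp add: algebra_simps)

lemma odd_square_counterexample:
  assumes "2 \<le> k"
  shows "is_array (2*k+1) 2 k (square_array (odd_square k))
    \<and> \<not> layerable (2*k+1) 2 k (square_array (odd_square k))"
proof -
  have "\<not> int k dvd potential_total (2*k+1) (odd_row_weight k) (odd_col_weight k) (odd_cell_weight k)"
    unfolding odd_potential_total using assms by (simp add: dvd_diff_right_iff)
  with assms show ?thesis
    by (intro square_array_counterexample)
      (use odd_square_cell odd_square_row_count_ge odd_square_col_count_ge odd_weights_dvd in auto)
qed

section \<open>Even order\<close>

text \<open>Low and high now refer to {1..k} and {k+1..2*k}; the lh and hh blocks are as in the odd case.\<close>

definition even_antidiag_lh :: "nat \<Rightarrow> nat \<Rightarrow> nat \<Rightarrow> nat" where
  "even_antidiag_lh k i j = (if i + j < 2*k+2 then i + j - k - 2 else i + j - 2*k - 2)"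

definition even_antidiag_hh :: "nat \<Rightarrow> nat \<Rightarrow> nat \<Rightarrow> nat" where
  "even_antidiag_hh k i j = (if i + j < 3*k+2 then i + j - 2*k - 2 else i + j - 3*k - 2)"

definition even_square :: "nat \<Rightarrow> nat \<Rightarrow> nat \<Rightarrow> nat set" where
  "even_square k i j =
    (if j < k then (if i \<le> k then {1..k} else {k+1..2*k})
     else if j = k then (if i \<le> k then {k+1..2*k} else {1..k})
     else if i \<le> k then insert (even_antidiag_lh k i j + 1) ({k+1..2*k} - {k + 1 + even_antidiag_lh k i j})
     else if even_antidiag_hh k i j = 0 then insert 1 ({k+1..2*k} - {k+1})
     else if even_antidiag_hh k i j = 1 then insert (k+1) ({1..k} - {1})
     else {1..k})"

lemma even_antidiag_lh_less: "i \<in> {1..k} \<Longrightarrow> j \<in> {k+1..2*k} \<Longrightarrow> even_antidiag_lh k i j < k"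
  unfolding even_antidiag_lh_def by auto

lemma even_antidiag_lh_inj_col:
  "i \<in> {1..k} \<Longrightarrow> j \<in> {k+1..2*k} \<Longrightarrow> j' \<in> {k+1..2*k}
    \<Longrightarrow> even_antidiag_lh k i j = even_antidiag_lh k i j' \<Longrightarrow> j = j'"
  unfolding even_antidiag_lh_def by (auto split: if_splits)

lemma even_antidiag_lh_inj_row:
  "j \<in> {k+1..2*k} \<Longrightarrow> i \<in> {1..k} \<Longrightarrow> i' \<in> {1..k}
    \<Longrightarrow> even_antidiag_lh k i j = even_antidiag_lh k i' j \<Longrightarrow> i = i'"
  unfolding even_antidiag_lh_def by (auto split: if_splits)

lemma even_antidiag_lh_surj_col:
  assumes "i \<in> {1..k}" "v < k"
  shows "\<exists>j\<in>{k+1..2*k}. even_antidiag_lh k i j = v"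
proof (cases "i \<le> v + 1")
  case True
  with assms show ?thesis
    by (intro bexI[of _ "v + k + 2 - i"]) (auto simp: even_antidiag_lh_def)
next
  case False
  with assms show ?thesis
    by (intro bexI[of _ "v + 2*k + 2 - i"]) (auto simp: even_antidiag_lh_def)
qed

lemma even_antidiag_lh_surj_row:
  assumes "j \<in> {k+1..2*k}" "v < k"
  shows "\<exists>i\<in>{1..k}. even_antidiag_lh k i j = v"
proof (cases "j \<le> v + k + 1")
  case True
  with assms show ?thesis
    by (intro bexI[of _ "v + k + 2 - j"]) (auto simp: even_antidiag_lh_def)
next
  case False
  with assms show ?thesis
    by (intro bexI[of _ "v + 2*k + 2 - j"]) (auto simp: even_antidiag_lh_def)
qed

lemma even_antidiag_hh_commute: "even_antidiag_hh k i j = even_antidiag_hh k j i"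
  unfolding even_antidiag_hh_def by (simp add: add.commute)

lemma even_antidiag_hh_inj:
  "i \<in> {k+1..2*k} \<Longrightarrow> j \<in> {k+1..2*k} \<Longrightarrow> j' \<in> {k+1..2*k}
    \<Longrightarrow> even_antidiag_hh k i j = even_antidiag_hh k i j' \<Longrightarrow> j = j'"
  unfolding even_antidiag_hh_def by (auto split: if_splits)

lemma even_antidiag_hh_surj:
  assumes "i \<in> {k+1..2*k}" "v < k"
  shows "\<exists>j\<in>{k+1..2*k}. even_antidiag_hh k i j = v"
proof (cases "i \<le> v + k + 1")
  case True
  with assms show ?thesis
    by (intro bexI[of _ "v + 2*k + 2 - i"]) (auto simp: even_antidiag_hh_def)
next
  case False
  with assms show ?thesis
    by (intro bexI[of _ "v + 3*k + 2 - i"]) (auto simp: even_antidiag_hh_def)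
qed

lemma even_square_lh_mem:
  "i \<in> {1..k} \<Longrightarrow> j \<in> {k+1..2*k} \<Longrightarrow> s \<in> {1..2*k} \<Longrightarrow>
    s \<in> even_square k i j \<longleftrightarrow>
      (if s \<le> k then s = even_antidiag_lh k i j + 1 else s \<noteq> k + 1 + even_antidiag_lh k i j)"
  using even_antidiag_lh_less[of i k j] by (auto simp: even_square_def)

lemma even_square_hh_mem:
  "i \<in> {k+1..2*k} \<Longrightarrow> j \<in> {k+1..2*k} \<Longrightarrow> s \<in> {1..2*k} \<Longrightarrow>
    s \<in> even_square k i j \<longleftrightarrow>
      (if s \<le> k then even_antidiag_hh k i j \<noteq> (if s = 1 then 1 else 0)
       else even_antidiag_hh k i j = (if s = k+1 then 1 else 0))"
  by (auto simp: even_square_def)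

lemma even_square_cell:
  assumes "1 \<le> k" "i \<in> {1..2*k}" "j \<in> {1..2*k}"
  shows "even_square k i j \<subseteq> {1..2*k} \<and> card (even_square k i j) = k"
proof -
  consider "j \<le> k" | "k < j" "i \<le> k" | "k < j" "k < i"
    by linarith
  then show ?thesis
  proof cases
    case 2
    then show ?thesis
      using assms even_antidiag_lh_less[of i k j] by (auto simp: even_square_def card_insert_if)
  qed (use assms in \<open>auto simp: even_square_def card_insert_if\<close>)
qed

lemma even_square_row_count_ge:
  assumes k: "2 \<le> k" and i: "i \<in> {1..2*k}" and s: "s \<in> {1..2*k}"
  shows "k \<le> card {t\<in>{1..2*k}. s \<in> even_square k i t}"
proof -
  let ?A = "{t\<in>{1..k}. s \<in> even_square k i t}" and ?B = "{t\<in>{k+1..2*k}. s \<in> even_square k i t}"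
  have split: "card {t\<in>{1..2*k}. s \<in> even_square k i t} = card ?A + card ?B"
    by (rule card_filter_atLeastAtMost_split) simp
  consider "s \<le> k" "i \<le> k" | "k < s" "k < i" | "k < s" "i \<le> k" | "s \<le> k" "k < i"
    by linarith
  then show ?thesis
  proof cases
    case 1
    have "s - 1 < k"
      using 1 s by auto
    then obtain j where "j \<in> {k+1..2*k}" "even_antidiag_lh k i j = s - 1"
      using 1 i even_antidiag_lh_surj_col[of i k] by force
    then have "{j} \<subseteq> ?B" "{1..k-1} \<subseteq> ?A"
      using 1 i s by (auto simp: even_square_lh_mem) (auto simp: even_square_def)
    then show ?thesis
      using split card_mono[of ?A "{1..k-1}"] card_mono[of ?B "{j}"] by simp
  next
    case 2
    have "(if s = k+1 then 1 else 0) < k"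
      using k by auto
    then obtain j where "j \<in> {k+1..2*k}" "even_antidiag_hh k i j = (if s = k+1 then 1 else 0)"
      using 2 i even_antidiag_hh_surj[of i k] by force
    then have "{j} \<subseteq> ?B" "{1..k-1} \<subseteq> ?A"
      using 2 i s by (auto simp: even_square_hh_mem) (auto simp: even_square_def)
    then show ?thesis
      using split card_mono[of ?A "{1..k-1}"] card_mono[of ?B "{j}"] by simp
  next
    case 3
    have "{k} \<subseteq> ?A"
      using 3 k s by (auto simp: even_square_def)
    moreover have "card {k+1..2*k} - 1 \<le> card {t\<in>{k+1..2*k}. s \<noteq> k + 1 + even_antidiag_lh k i t}"
      using 3 i even_antidiag_lh_inj_col[of i k] by (intro card_filter_ge_card_minus_1) auto
    moreover have "?B = {t\<in>{k+1..2*k}. s \<noteq> k + 1 + even_antidiag_lh k i t}"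
      using 3 i s by (auto simp: even_square_lh_mem)
    ultimately show ?thesis
      using split card_mono[of ?A "{k}"] by simp
  next
    case 4
    have "{k} \<subseteq> ?A"
      using 4 k s by (auto simp: even_square_def)
    moreover have "card {k+1..2*k} - 1 \<le> card {t\<in>{k+1..2*k}. even_antidiag_hh k i t \<noteq> (if s = 1 then 1 else 0)}"
      using 4 i even_antidiag_hh_inj[of i k] by (intro card_filter_ge_card_minus_1) auto
    moreover have "?B = {t\<in>{k+1..2*k}. even_antidiag_hh k i t \<noteq> (if s = 1 then 1 else 0)}"
      using 4 i s by (auto simp: even_square_hh_mem)
    ultimately show ?thesis
      using split card_mono[of ?A "{k}"] by simp
  qed
qed

lemma even_square_col_count_ge:
  assumes k: "2 \<le> k" and j: "j \<in> {1..2*k}" and s: "s \<in> {1..2*k}"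
  shows "k \<le> card {t\<in>{1..2*k}. s \<in> even_square k t j}"
proof -
  let ?A = "{t\<in>{1..k}. s \<in> even_square k t j}" and ?B = "{t\<in>{k+1..2*k}. s \<in> even_square k t j}"
  have split: "card {t\<in>{1..2*k}. s \<in> even_square k t j} = card ?A + card ?B"
    by (rule card_filter_atLeastAtMost_split) simp
  consider "j \<le> k" | "k < j" "s \<le> k" | "k < j" "k < s"
    by linarith
  then show ?thesis
  proof cases
    case 1
    then have "?A = {1..k} \<or> ?B = {k+1..2*k}"
      using s by (cases "s \<le> k"; cases "j = k") (auto simp: even_square_def)
    then show ?thesis
      using split by auto
  next
    case 2
    have "s - 1 < k"
      using 2 s by auto
    then obtain i where "i \<in> {1..k}" "even_antidiag_lh k i j = s - 1"
      using 2 j even_antidiag_lh_surj_row[of j k] by force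
    then have "{i} \<subseteq> ?A"
      using 2 j s by (auto simp: even_square_lh_mem)
    moreover have "card {k+1..2*k} - 1 \<le> card {t\<in>{k+1..2*k}. even_antidiag_hh k t j \<noteq> (if s = 1 then 1 else 0)}"
      using 2 j even_antidiag_hh_inj[of j k] by (intro card_filter_ge_card_minus_1) (auto simp: even_antidiag_hh_commute)
    moreover have "?B = {t\<in>{k+1..2*k}. even_antidiag_hh k t j \<noteq> (if s = 1 then 1 else 0)}"
      using 2 j s by (auto simp: even_square_hh_mem)
    ultimately show ?thesis
      using split card_mono[of ?A "{i}"] by simp
  next
    case 3
    have "(if s = k+1 then 1 else 0) < k"
      using k by auto
    then obtain i where "i \<in> {k+1..2*k}" "even_antidiag_hh k i j = (if s = k+1 then 1 else 0)"
      using 3 j even_antidiag_hh_surj[of j k] by (force simp: even_antidiag_hh_commute)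
    then have "{i} \<subseteq> ?B"
      using 3 j s by (auto simp: even_square_hh_mem)
    moreover have "card {1..k} - 1 \<le> card {t\<in>{1..k}. s \<noteq> k + 1 + even_antidiag_lh k t j}"
      using 3 j even_antidiag_lh_inj_row[of j k] by (intro card_filter_ge_card_minus_1) auto
    moreover have "?A = {t\<in>{1..k}. s \<noteq> k + 1 + even_antidiag_lh k t j}"
      using 3 j s by (auto simp: even_square_lh_mem)
    ultimately show ?thesis
      using split card_mono[of ?B "{i}"] by simp
  qed
qed

definition even_row_weight :: "nat \<Rightarrow> nat \<Rightarrow> nat \<Rightarrow> int" where
  "even_row_weight k i s =
    (if i \<le> k \<and> s \<le> k then int s - int i
     else if k < i \<and> k < s then int i - int k - 1 - (if s = k+1 then 1 else 0) else 0)"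

definition even_col_weight :: "nat \<Rightarrow> nat \<Rightarrow> nat \<Rightarrow> int" where
  "even_col_weight k j s =
    (if k < j \<and> s \<le> k then - (int j - int k - 1)
     else if j < k then (if s \<le> k then - (int s - 1) else if s = k+1 then 1 else 0) else 0)"

definition even_cell_weight :: "nat \<Rightarrow> nat \<Rightarrow> nat \<Rightarrow> int" where
  "even_cell_weight k i j =
    (if k < i \<and> k < j then int j - int k - 1
     else if j < k then (if i \<le> k then int i - 1 else - (int i - int k - 1)) else 0)"

lemma even_antidiag_lh_dvd:
  "i \<in> {1..k} \<Longrightarrow> j \<in> {k+1..2*k} \<Longrightarrow> int k dvd int (even_antidiag_lh k i j) + int k + 2 - int i - int j"
  by (auto simp: even_antidiag_lh_def of_nat_diff)

lemma even_antidiag_hh_dvd: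
  "i \<in> {k+1..2*k} \<Longrightarrow> j \<in> {k+1..2*k} \<Longrightarrow> int k dvd int (even_antidiag_hh k i j) + 2 * int k + 2 - int i - int j"
  by (auto simp: even_antidiag_hh_def of_nat_diff)

lemma even_weights_dvd:
  assumes k: "1 \<le> k" and i: "i \<in> {1..2*k}" and j: "j \<in> {1..2*k}" and s: "s \<in> even_square k i j"
  shows "int k dvd even_row_weight k i s + even_col_weight k j s + even_cell_weight k i j"
proof -
  have s_range: "s \<in> {1..2*k}"
    using even_square_cell[OF k i j] s by blast
  consider "j \<le> k" | "k < j" "i \<le> k" | "k < j" "k < i"
    by linarith
  then show ?thesis
  proof cases
    case 1
    with s have "if i \<le> k = (j < k) then s \<le> k else k < s"
      by (auto simp: even_square_def split: if_splits)
    with 1 show ?thesis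
      by (auto simp: even_row_weight_def even_col_weight_def even_cell_weight_def split: if_splits)
  next
    case 2
    then have "s \<le> k \<longrightarrow> s = even_antidiag_lh k i j + 1"
      using i j s s_range by (auto simp: even_square_lh_mem)
    with 2 show ?thesis
      using i j even_antidiag_lh_dvd[of i k j]
      by (auto simp: even_row_weight_def even_col_weight_def even_cell_weight_def algebra_simps)
  next
    case 3
    then have "k < s \<longrightarrow> even_antidiag_hh k i j = (if s = k+1 then 1 else 0)"
      using i j s s_range by (auto simp: even_square_hh_mem)
    with 3 show ?thesis
      using i j even_antidiag_hh_dvd[of i k j]
      by (auto simp: even_row_weight_def even_col_weight_def even_cell_weight_def algebra_simps)
  qed
qed

lemma even_row_weight_sum:
  assumes "1 \<le> k"
  shows "(\<Sum>i\<in>{1..2*k}. \<Sum>x\<in>{1..2*k}. even_row_weight k i x)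
    = int k * (\<Sum>i\<in>{k+1..2*k}. int i - int k - 1) - int k"
proof -
  have low: "(\<Sum>x\<in>{1..2*k}. even_row_weight k i x) = (\<Sum>s\<in>{1..k}. int s) - int k * int i"
    if "i \<le> k" for i
    using that
    by (subst sum_atLeastAtMost_split_cong[where g = "\<lambda>s. int s - int i" and h = "\<lambda>_. 0"])
      (auto simp: even_row_weight_def sum_subtractf)
  have high: "(\<Sum>x\<in>{1..2*k}. even_row_weight k i x) = int k * (int i - int k - 1) - 1"
    if "k < i" for i
  proof -
    have "(\<Sum>x\<in>{1..2*k}. even_row_weight k i x)
        = (\<Sum>s\<in>{1..k}. 0) + (\<Sum>s\<in>{k+1..2*k}. int i - int k - 1 - (if s = k+1 then 1 else 0))"
      using that by (intro sum_atLeastAtMost_split_cong) (auto simp: even_row_weight_def)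
    with assms show ?thesis
      by (simp add: sum_subtractf sum.delta)
  qed
  have "(\<Sum>i\<in>{1..2*k}. \<Sum>x\<in>{1..2*k}. even_row_weight k i x)
      = (\<Sum>i\<in>{1..k}. (\<Sum>s\<in>{1..k}. int s) - int k * int i)
        + (\<Sum>i\<in>{k+1..2*k}. int k * (int i - int k - 1) - 1)"
    by (intro sum_atLeastAtMost_split_cong low high) auto
  then show ?thesis
    by (simp add: sum_subtractf flip: sum_distrib_left)
qed

lemma even_col_weight_sum:
  assumes "1 \<le> k"
  shows "(\<Sum>j\<in>{1..2*k}. \<Sum>x\<in>{1..2*k}. even_col_weight k j x)
    = (int k - 1) * (int k + 1 - (\<Sum>s\<in>{1..k}. int s)) - int k * (\<Sum>j\<in>{k+1..2*k}. int j - int k - 1)"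
proof -
  have low: "(\<Sum>x\<in>{1..2*k}. even_col_weight k j x)
      = (if j < k then int k + 1 - (\<Sum>s\<in>{1..k}. int s) else 0)" if "j \<le> k" for j
  proof -
    have "(\<Sum>x\<in>{1..2*k}. even_col_weight k j x)
        = (\<Sum>s\<in>{1..k}. if j < k then 1 - int s else 0)
          + (\<Sum>s\<in>{k+1..2*k}. if j < k \<and> s = k+1 then 1 else 0)"
      using that by (intro sum_atLeastAtMost_split_cong) (auto simp: even_col_weight_def)
    with assms show ?thesis
      by (simp add: sum_subtractf sum.delta)
  qed
  have high: "(\<Sum>x\<in>{1..2*k}. even_col_weight k j x) = - int k * (int j - int k - 1)"
    if "k < j" for j
  proof -
    have "(\<Sum>x\<in>{1..2*k}. even_col_weight k j x)
        = (\<Sum>s\<in>{1..k}. - (int j - int k - 1)) + (\<Sum>s\<in>{k+1..2*k}. 0)"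
      using that by (intro sum_atLeastAtMost_split_cong) (auto simp: even_col_weight_def)
    then show ?thesis
      by (simp add: algebra_simps)
  qed
  have "(\<Sum>j\<in>{1..2*k}. \<Sum>x\<in>{1..2*k}. even_col_weight k j x)
      = (\<Sum>j\<in>{1..k}. if j < k then int k + 1 - (\<Sum>s\<in>{1..k}. int s) else 0)
        + (\<Sum>j\<in>{k+1..2*k}. - int k * (int j - int k - 1))"
    by (intro sum_atLeastAtMost_split_cong low high) auto
  with assms show ?thesis
    by (simp add: sum_atLeastAtMost_if_less of_nat_diff sum_negf flip: sum_distrib_left)
qed

lemma even_cell_weight_sum:
  assumes "1 \<le> k"
  shows "(\<Sum>i\<in>{1..2*k}. \<Sum>j\<in>{1..2*k}. even_cell_weight k i j)
    = (int k - 1) * ((\<Sum>s\<in>{1..k}. int s) - int k) + (\<Sum>j\<in>{k+1..2*k}. int j - int k - 1)"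
    (is "_ = _ + ?G")
proof -
  have low: "(\<Sum>j\<in>{1..2*k}. even_cell_weight k i j) = (int k - 1) * (int i - 1)" if "i \<le> k" for i
  proof -
    have "(\<Sum>j\<in>{1..2*k}. even_cell_weight k i j)
        = (\<Sum>j\<in>{1..k}. if j < k then int i - 1 else 0) + (\<Sum>j\<in>{k+1..2*k}. 0)"
      using that by (intro sum_atLeastAtMost_split_cong) (auto simp: even_cell_weight_def)
    with assms show ?thesis
      by (simp add: sum_atLeastAtMost_if_less of_nat_diff)
  qed
  have high: "(\<Sum>j\<in>{1..2*k}. even_cell_weight k i j)
      = (\<Sum>j\<in>{k+1..2*k}. int j - int k - 1) - (int k - 1) * (int i - int k - 1)" if "k < i" for i
  proof -
    have "(\<Sum>j\<in>{1..2*k}. even_cell_weight k i j)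
        = (\<Sum>j\<in>{1..k}. if j < k then - (int i - int k - 1) else 0) + (\<Sum>j\<in>{k+1..2*k}. int j - int k - 1)"
      using that by (intro sum_atLeastAtMost_split_cong) (auto simp: even_cell_weight_def)
    with assms show ?thesis
      by (simp add: sum_atLeastAtMost_if_less of_nat_diff algebra_simps)
  qed
  have "(\<Sum>i\<in>{1..2*k}. \<Sum>j\<in>{1..2*k}. even_cell_weight k i j)
      = (\<Sum>i\<in>{1..k}. (int k - 1) * (int i - 1))
        + (\<Sum>i\<in>{k+1..2*k}. (\<Sum>j\<in>{k+1..2*k}. int j - int k - 1) - (int k - 1) * (int i - int k - 1))"
    by (intro sum_atLeastAtMost_split_cong low high) auto
  also have "(\<Sum>i\<in>{1..k}. (int k - 1) * (int i - 1)) = (int k - 1) * ((\<Sum>s\<in>{1..k}. int s) - int k)"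
    by (simp add: sum_subtractf flip: sum_distrib_left)
  also have "(\<Sum>i\<in>{k+1..2*k}. ?G - (int k - 1) * (int i - int k - 1)) = int k * ?G - (int k - 1) * ?G"
    by (simp only: sum_subtractf flip: sum_distrib_left) (simp add: algebra_simps)
  finally show ?thesis
    by (simp add: algebra_simps)
qed

lemma even_potential_total:
  assumes "1 \<le> k"
  shows "potential_total (2*k) (even_row_weight k) (even_col_weight k) (even_cell_weight k)
    = (\<Sum>j\<in>{k+1..2*k}. int j - int k - 1) - 1"
  unfolding potential_total_def even_row_weight_sum[OF assms] even_col_weight_sum[OF assms]
    even_cell_weight_sum[OF assms]
  by (simp add: algebra_simps)

lemma not_dvd_even_potential_total:
  assumes "3 \<le> k"
  shows "\<not> int k dvd potential_total (2*k) (even_row_weight k) (even_col_weight k) (even_cell_weight k)"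
proof
  assume "int k dvd potential_total (2*k) (even_row_weight k) (even_col_weight k) (even_cell_weight k)"
  then have "int k dvd (\<Sum>j\<in>{k+1..2*k}. int j - int k - 1) - 1"
    using assms by (subst (asm) even_potential_total) simp_all
  then have "int k dvd 2 * ((\<Sum>j\<in>{k+1..k+k}. int j - int k - 1) - 1)"
    by (simp only: mult_2[of k] dvd_mult)
  also have "2 * ((\<Sum>j\<in>{k+1..k+k}. int j - int k - 1) - 1) = int k * (int k - 1) - 2"
    using double_gauss_sum_shifted[of k k] by (simp only: right_diff_distrib)
  finally have "int k dvd 2"
    by (simp add: dvd_diff_right_iff)
  with assms show False
    using zdvd_imp_le[of "int k" 2] by simp
qed

lemma even_square_counterexample:
  assumes "3 \<le> k"
  shows "is_array (2*k) 2 k (square_array (even_square k))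
    \<and> \<not> layerable (2*k) 2 k (square_array (even_square k))"
  using assms not_dvd_even_potential_total[OF assms]
  by (intro square_array_counterexample)
    (use even_square_cell even_square_row_count_ge even_square_col_count_ge even_weights_dvd in auto)

theorem theorem8:
  fixes n :: nat
  assumes "n \<ge> 5"
  shows "\<exists>A. is_array n 2 (n div 2) A \<and> \<not> layerable n 2 (n div 2) A"
proof (cases "even n")
  case True
  then obtain k where n: "n = 2*k"
    by blast
  with assms have "3 \<le> k"
    by simp
  with n show ?thesis
    using even_square_counterexample[of k] by auto
next
  case False
  then obtain k where n: "n = 2*k+1"
    using oddE by blast
  with assms have "2 \<le> k"
    by simp
  with n show ?thesis
    using odd_square_counterexample[of k] by auto
qed

end
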